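(* For even $m\ge 18$, let $G^{\mathrm{mix}}_m$ be the graph with vertex set $\{u^*\}\cup\{a\}\cup B\cup\{z,x,y\}\cup L$, where $\{a\}\cup B$ with $|B|=3$ induces a $K_4$, $|L|=m-14$, $u^*$ is adjacent to every vertex of $\{a\}\cup B\cup\{z\}\cup L$, and the remaining edges are exactly $ax$, $xy$, $yz$ (so $G^{\mathrm{mix}}_m$ has $m$ edges). Its spectral radius equals the largest root of \[ f_{\mathrm{mix}}(x)=x^7-2x^6+(3-m)x^5+(2m-24)x^4+(6m-61)x^3+(84-6m)x^2+(90-7m)x+2m-28, \] and $\rho(G^{\mathrm{mix}}_m)<\rho'(m)$.
   Context: $\rho(G)$ denotes the adjacency spectral radius. For even $m$, $\rho'(m)$ is the largest real root of $p_m(x)=x^4-mx^2-(m-2)x+\frac{m}{2}-1$. *)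

theory Defs
  imports "Jordan_Normal_Form.Spectral_Radius"
begin

text \<open>Vertex labelling of G^mix_m on {0..<m-6}:
  0 = u*, 1 = a, 2,3,4 = B, 5 = z, 6 = x, 7 = y, 8..m-7 = L (m-14 vertices).\<close>

definition mix_edges :: "nat \<Rightarrow> nat set set" where
  "mix_edges m =
     {{1,2},{1,3},{1,4},{2,3},{2,4},{3,4}}
   \<union> {{0,v} | v. v \<in> {1,2,3,4,5} \<union> {8..<m-6}}
   \<union> {{1,6},{6,7},{7,5}}"

definition mix_adj_mat :: "nat \<Rightarrow> complex mat" where
  "mix_adj_mat m = mat (m-6) (m-6) (\<lambda>(i,j). if {i,j} \<in> mix_edges m then 1 else 0)"

definition f_mix :: "nat \<Rightarrow> real \<Rightarrow> real" where
  "f_mix m x = x^7 - 2*x^6 + (3 - real m)*x^5 + (2*real m - 24)*x^4 + (6*real m - 61)*x^3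
     + (84 - 6*real m)*x^2 + (90 - 7*real m)*x + 2*real m - 28"

definition p_m :: "nat \<Rightarrow> real \<Rightarrow> real" where
  "p_m m x = x^4 - real m * x^2 - (real m - 2)*x + real m / 2 - 1"

definition rho' :: "nat \<Rightarrow> real" where
  "rho' m = Max {x. p_m m x = 0}"

end

theory Submission
  imports Defs
begin

text \<open>A positive vector \<open>w\<close> with \<open>A w = r w\<close> bounds the modulus of every eigenvalue of a
  nonnegative matrix \<open>A\<close> by \<open>r\<close>, so \<open>r\<close> is the spectral radius. For \<open>G\<^sup>m\<^sup>i\<^sup>x\<^sub>m\<close> such a vector
  exists at the largest root \<open>r\<close> of \<open>f_mix\<close>: its entries are polynomials in \<open>r\<close> that are
  positive for \<open>r \<ge> 21/5\<close>, and \<open>f_mix(21/5) < 0\<close> puts \<open>r\<close> beyond \<open>21/5\<close>.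
  Writing \<open>f_mix = a - m l\<close> and \<open>2 p_m = s - m q\<close> with \<open>l, q > 0\<close>, the condition \<open>p_m(x) \<ge> 0\<close>
  gives \<open>q f_mix(x) \<ge> a q - s l\<close>, a polynomial free of \<open>m\<close> that is positive for \<open>x \<ge> 21/5\<close>.
  Hence \<open>p_m(r) < 0\<close>, which places \<open>r\<close> below the largest root \<open>\<rho>'(m)\<close> of \<open>p_m\<close>.\<close>

lemma index_mult_mat_vec_sum:
  assumes "A \<in> carrier_mat n n" and "v \<in> carrier_vec n" and "i < n"
  shows "(A *\<^sub>v v) $ i = (\<Sum>j<n. A $$ (i,j) * v $ j)"
  using assms by (auto simp: scalar_prod_def lessThan_atLeast0 intro!: sum.cong)

lemma eigenvalue_norm_le_of_positive_eigenvector: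
  fixes A :: "complex mat" and c :: "nat \<Rightarrow> nat \<Rightarrow> real" and w :: "nat \<Rightarrow> real"
  assumes A: "A \<in> carrier_mat n n"
    and entries: "\<And>i j. i < n \<Longrightarrow> j < n \<Longrightarrow> A $$ (i,j) = of_real (c i j)"
    and c_nonneg: "\<And>i j. i < n \<Longrightarrow> j < n \<Longrightarrow> 0 \<le> c i j"
    and w_pos: "\<And>i. i < n \<Longrightarrow> 0 < w i"
    and eigen: "\<And>i. i < n \<Longrightarrow> (\<Sum>j<n. c i j * w j) = r * w i"
    and "eigenvalue A \<mu>"
  shows "norm \<mu> \<le> r"
proof -
  obtain v where v: "v \<in> carrier_vec n" and v_nz: "v \<noteq> 0\<^sub>v n" and Av: "A *\<^sub>v v = \<mu> \<cdot>\<^sub>v v"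
    using \<open>eigenvalue A \<mu>\<close> A unfolding eigenvalue_def eigenvector_def by auto
  obtain k where k: "k < n" "v $ k \<noteq> 0"
    using v v_nz by (metis eq_vecI carrier_vecD index_zero_vec(1,2))
  \<comment> \<open>Compare \<open>|v|\<close> with \<open>w\<close> at an index maximising \<open>|v\<^sub>j| / w\<^sub>j\<close>.\<close>
  define S where "S = (\<lambda>j. norm (v $ j) / w j) ` {..<n}"
  define t where "t = Max S"
  have "finite S" "S \<noteq> {}"
    using k unfolding S_def by auto
  from Max_in[OF this] obtain i where i: "i < n" "t = norm (v $ i) / w i"
    unfolding t_def S_def by auto
  have bound: "norm (v $ j) \<le> t * w j" if "j < n" for j
  proof -
    have "norm (v $ j) / w j \<le> t"
      unfolding t_def S_def using that by (intro Max_ge) auto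
    then show ?thesis
      using w_pos[OF that] by (simp add: divide_le_eq)
  qed
  have "0 < norm (v $ k) / w k"
    using k w_pos[of k] by simp
  also have "\<dots> \<le> t"
    unfolding t_def S_def using k by (intro Max_ge) auto
  finally have vi_pos: "0 < norm (v $ i)"
    using i w_pos[of i] by (simp add: zero_less_divide_iff)
  have "\<mu> * v $ i = (A *\<^sub>v v) $ i"
    using Av i v by simp
  also have "\<dots> = (\<Sum>j<n. of_real (c i j) * v $ j)"
    using index_mult_mat_vec_sum[OF A v i(1)] entries i by simp
  finally have "norm \<mu> * norm (v $ i) = norm (\<Sum>j<n. of_real (c i j) * v $ j)"
    by (metis norm_mult)
  also have "\<dots> \<le> (\<Sum>j<n. norm (of_real (c i j) * v $ j))"
    by (rule norm_sum)
  also have "\<dots> = (\<Sum>j<n. c i j * norm (v $ j))"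
    using c_nonneg i by (intro sum.cong) (auto simp: norm_mult)
  also have "\<dots> \<le> (\<Sum>j<n. c i j * (t * w j))"
    using c_nonneg i bound by (intro sum_mono mult_left_mono) auto
  also have "\<dots> = t * (\<Sum>j<n. c i j * w j)"
    by (simp add: sum_distrib_left algebra_simps)
  also have "\<dots> = r * norm (v $ i)"
    using eigen[OF i(1)] i w_pos[of i] unfolding t_def by simp
  finally show ?thesis
    using vi_pos by simp
qed

lemma eigenvalue_of_real_eigenvector:
  fixes A :: "complex mat" and c :: "nat \<Rightarrow> nat \<Rightarrow> real" and w :: "nat \<Rightarrow> real"
  assumes A: "A \<in> carrier_mat n n"
    and entries: "\<And>i j. i < n \<Longrightarrow> j < n \<Longrightarrow> A $$ (i,j) = of_real (c i j)"
    and "k < n" and "w k \<noteq> 0"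
    and eigen: "\<And>i. i < n \<Longrightarrow> (\<Sum>j<n. c i j * w j) = r * w i"
  shows "eigenvalue A (of_real r)"
proof -
  define v where "v = vec n (\<lambda>i. complex_of_real (w i))"
  have v: "v \<in> carrier_vec n"
    unfolding v_def by simp
  have "v \<noteq> 0\<^sub>v n"
    using \<open>k < n\<close> \<open>w k \<noteq> 0\<close> unfolding v_def by (metis index_vec index_zero_vec(1) of_real_eq_0_iff)
  moreover have "A *\<^sub>v v = of_real r \<cdot>\<^sub>v v"
  proof (rule eq_vecI)
    fix i assume "i < dim_vec (of_real r \<cdot>\<^sub>v v)"
    then have i: "i < n"
      using v by simp
    have "(A *\<^sub>v v) $ i = (\<Sum>j<n. of_real (c i j * w j))"
      using index_mult_mat_vec_sum[OF A v i] entries i unfolding v_def by simp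
    also have "\<dots> = of_real (r * w i)"
      using eigen[OF i] by (metis of_real_sum)
    finally show "(A *\<^sub>v v) $ i = (of_real r \<cdot>\<^sub>v v) $ i"
      using i unfolding v_def by simp
  qed (use A v in auto)
  ultimately show ?thesis
    unfolding eigenvalue_def eigenvector_def using A v by auto
qed

lemma spectral_radius_eq_of_positive_eigenvector:
  fixes A :: "complex mat" and c :: "nat \<Rightarrow> nat \<Rightarrow> real" and w :: "nat \<Rightarrow> real"
  assumes A: "A \<in> carrier_mat n n" and "0 < n"
    and entries: "\<And>i j. i < n \<Longrightarrow> j < n \<Longrightarrow> A $$ (i,j) = of_real (c i j)"
    and c_nonneg: "\<And>i j. i < n \<Longrightarrow> j < n \<Longrightarrow> 0 \<le> c i j"
    and w_pos: "\<And>i. i < n \<Longrightarrow> 0 < w i"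
    and eigen: "\<And>i. i < n \<Longrightarrow> (\<Sum>j<n. c i j * w j) = r * w i"
  shows "spectral_radius A = r"
proof -
  have "0 \<le> r * w 0"
    unfolding eigen[OF \<open>0 < n\<close>, symmetric]
    using c_nonneg w_pos \<open>0 < n\<close> by (intro sum_nonneg) (simp add: less_imp_le)
  then have "0 \<le> r"
    using w_pos[OF \<open>0 < n\<close>] by (simp add: zero_le_mult_iff)
  moreover have "of_real r \<in> spectrum A"
    using eigenvalue_of_real_eigenvector[OF A entries \<open>0 < n\<close> _ eigen] w_pos[OF \<open>0 < n\<close>]
    unfolding spectrum_def by simp
  moreover have "norm \<mu> \<le> r" if "\<mu> \<in> spectrum A" for \<mu>
    using eigenvalue_norm_le_of_positive_eigenvector[OF A entries c_nonneg w_pos eigen] that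
    unfolding spectrum_def by simp
  ultimately show ?thesis
    unfolding spectral_radius_def using card_finite_spectrum(1)[OF A]
    by (intro Max_eqI) (auto intro: rev_image_eqI)
qed

lemma mix_adj_mat_carrier: "mix_adj_mat m \<in> carrier_mat (m-6) (m-6)"
  unfolding mix_adj_mat_def by simp

lemma mix_adj_mat_entry:
  "i < m-6 \<Longrightarrow> j < m-6 \<Longrightarrow>
   mix_adj_mat m $$ (i,j) = of_real (if {i,j} \<in> mix_edges m then 1 else 0)"
  unfolding mix_adj_mat_def by simp

lemma mix_neighbourhood:
  assumes "18 \<le> m" and "i < m-6"
  shows "{j. j < m-6 \<and> {i,j} \<in> mix_edges m} =
    (if i = 0 then {1,2,3,4,5} \<union> {8..<m-6} else if i = 1 then {0,2,3,4,6}
     else if i = 2 then {0,1,3,4} else if i = 3 then {0,1,2,4} else if i = 4 then {0,1,2,3}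
     else if i = 5 then {0,7} else if i = 6 then {1,7} else if i = 7 then {5,6} else {0})"
  using assms unfolding mix_edges_def by (auto simp: doubleton_eq_iff)

text \<open>Solving \<open>A w = r w\<close> at every vertex except \<open>u\<^sup>*\<close>, with each vertex of \<open>L\<close> given
  weight \<open>l(r) = r\<^sup>5 - 2r\<^sup>4 - 6r\<^sup>3 + 6r\<^sup>2 + 7r - 2\<close>; the remaining equation at \<open>u\<^sup>*\<close> is \<open>f_mix m r = 0\<close>.\<close>

definition mix_weight :: "real \<Rightarrow> nat \<Rightarrow> real" where
  "mix_weight r j =
     (if j = 0 then r * (r^5 - 2*r^4 - 6*r^3 + 6*r^2 + 7*r - 2)
      else if j = 1 then r^5 + r^4 - 2*r^3 - r^2 - 2*r
      else if j \<in> {2,3,4} then r^5 + r^4 - 3*r^3 - 2*r^2 + 2*r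
      else if j = 5 then r^5 - 2*r^4 - 5*r^3 + 5*r^2 + 4*r
      else if j = 6 then r^4 + 2*r^3 - 3*r^2 - 4*r
      else if j = 7 then r^4 - r^3 - 3*r^2 + 2*r
      else r^5 - 2*r^4 - 6*r^3 + 6*r^2 + 7*r - 2)"

lemma mix_weight_pos:
  assumes "21/5 \<le> r"
  shows "0 < mix_weight r j"
proof -
  define t where "t = r - 21/5"
  have t: "0 \<le> t" and r: "r = t + 21/5"
    using assms unfolding t_def by simp_all
  have "r^5 - 2*r^4 - 6*r^3 + 6*r^2 + 7*r - 2
      = 1166516/3125 + 87878/125*t + 2298/5*t^2 + 684/5*t^3 + 19*t^4 + t^5"
   and "r^5 + r^4 - 2*r^3 - r^2 - 2*r
      = 4512081/3125 + 43399/25*t + 20513/25*t^2 + 956/5*t^3 + 22*t^4 + t^5"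
   and "r^5 + r^4 - 3*r^3 - 2*r^2 + 2*r
      = 4277931/3125 + 41966/25*t + 20173/25*t^2 + 951/5*t^3 + 22*t^4 + t^5"
   and "r^5 - 2*r^4 - 5*r^3 + 5*r^2 + 4*r
      = 1309791/3125 + 93068/125*t + 2356/5*t^2 + 689/5*t^3 + 19*t^4 + t^5"
   and "r^4 + 2*r^3 - 3*r^2 - 4*r = 243516/625 + 46624/125*t + 3201/25*t^2 + 94/5*t^3 + t^4"
   and "r^4 - r^3 - 3*r^2 + 2*r = 120351/625 + 27529/125*t + 2256/25*t^2 + 79/5*t^3 + t^4"
    unfolding r by (simp_all add: eval_nat_numeral field_simps)
  note taylor_at_21_5 = this
  show ?thesis
    unfolding mix_weight_def taylor_at_21_5 using t assms by (simp add: add_pos_nonneg)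
qed

lemma mix_weight_eigen:
  assumes "18 \<le> m" and "f_mix m r = 0" and "i < m-6"
  shows "(\<Sum>j<m-6. (if {i,j} \<in> mix_edges m then 1 else 0) * mix_weight r j) = r * mix_weight r i"
proof -
  have "(\<Sum>j<m-6. (if {i,j} \<in> mix_edges m then 1 else 0) * mix_weight r j)
      = (\<Sum>j\<in>{j. j < m-6 \<and> {i,j} \<in> mix_edges m}. mix_weight r j)"
    by (rule sum.mono_neutral_cong_right) auto
  also have "\<dots> = r * mix_weight r i"
  proof (cases "i = 0")
    case True
    have "(\<Sum>j\<in>{8..<m-6}. mix_weight r j) = real (m - 14) * mix_weight r 8"
      by (simp add: mix_weight_def)
    moreover have "(\<Sum>j\<in>{1,2,3,4,5} \<union> {8..<m-6}. mix_weight r j)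
        = (\<Sum>j\<in>{1,2,3,4,5}. mix_weight r j) + (\<Sum>j\<in>{8..<m-6}. mix_weight r j)"
      by (intro sum.union_disjoint) auto
    ultimately show ?thesis
      using True assms mix_neighbourhood[OF assms(1,3)]
      by (simp add: mix_weight_def f_mix_def of_nat_diff algebra_simps eval_nat_numeral)
  next
    case False
    then show ?thesis
      using mix_neighbourhood[OF assms(1,3)] by (auto simp: mix_weight_def algebra_simps eval_nat_numeral)
  qed
  finally show ?thesis .
qed

lemma finite_f_mix_roots: "finite {x. f_mix m x = 0}"
proof -
  let ?p = "[:2*real m - 28, 90 - 7*real m, 84 - 6*real m, 6*real m - 61, 2*real m - 24,
             3 - real m, -2, 1:]"
  have "f_mix m x = poly ?p x" for x
    unfolding f_mix_def by (simp add: algebra_simps eval_nat_numeral)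
  then show ?thesis
    using poly_roots_finite[of ?p] by simp
qed

lemma finite_p_m_roots: "finite {x. p_m m x = 0}"
proof -
  let ?p = "[:real m/2 - 1, 2 - real m, - real m, 0, 1:]"
  have "p_m m x = poly ?p x" for x
    unfolding p_m_def by (simp add: algebra_simps eval_nat_numeral)
  then show ?thesis
    using poly_roots_finite[of ?p] by simp
qed

lemma f_mix_neg_at_21_5:
  assumes "18 \<le> m"
  shows "f_mix m (21/5) < 0"
proof -
  have "f_mix m (21/5) = 456322531/78125 - real m * (1166516/3125)"
    unfolding f_mix_def by (simp add: power_divide field_simps)
  then show ?thesis
    using assms by simp
qed

lemma p_m_nonneg_if_ge_m:
  assumes "18 \<le> m" and "real m \<le> x"
  shows "0 \<le> p_m m x"
proof -
  have x: "18 \<le> x"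
    using assms by linarith
  have "real m * x^2 \<le> x * x^2"
    using assms(2) by (intro mult_right_mono) auto
  moreover have "(real m - 2) * x \<le> x * x"
    using assms(2) x by (intro mult_right_mono) auto
  moreover have "x * x \<le> x^2 * x"
    using x by (intro mult_right_mono) (auto simp: power2_eq_square)
  moreover have "x^2 * (x + 1) \<le> x^2 * x^2"
    using x by (intro mult_left_mono) (auto simp: power2_eq_square intro: order_trans[of _ "2*x"])
  ultimately show ?thesis
    using assms(1) unfolding p_m_def by (simp add: algebra_simps eval_nat_numeral)
qed

lemma f_mix_pos_if_p_m_nonneg:
  assumes x: "21/5 \<le> x" and "0 \<le> p_m m x"
  shows "0 < f_mix m x"
proof -
  define l where "l = x^5 - 2*x^4 - 6*x^3 + 6*x^2 + 7*x - 2"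
  define a where "a = x^7 - 2*x^6 + 3*x^5 - 24*x^4 - 61*x^3 + 84*x^2 + 90*x - 28"
  define q where "q = 2*x^2 + 2*x - 1"
  define s where "s = 2*x^4 + 4*x - 2"
  have f: "f_mix m x = a - real m * l"
    unfolding f_mix_def a_def l_def by (simp add: algebra_simps)
  have mq: "real m * q \<le> s"
    using \<open>0 \<le> p_m m x\<close> unfolding p_m_def q_def s_def by (simp add: algebra_simps)
  have q: "0 < q"
    using x zero_le_power2[of x] unfolding q_def by linarith
  define t where "t = x - 21/5"
  have t: "0 \<le> t" and x_eq: "x = t + 21/5"
    using x unfolding t_def by simp_all
  have "l = 1166516/3125 + 87878/125*t + 2298/5*t^2 + 684/5*t^3 + 19*t^4 + t^5"
    unfolding l_def x_eq by (simp add: eval_nat_numeral field_simps)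
  then have l: "0 < l"
    using t by (simp add: add_pos_nonneg)
  have "a * q - s * l = 4475094237/390625 + 15744612061/78125*t + 4473865266/15625*t^2
      + 549084962/3125*t^3 + 7354148/125*t^4 + 1440672/125*t^5 + 32851/25*t^6 + 401/5*t^7 + 2*t^8"
    unfolding a_def q_def s_def l_def x_eq by (simp add: eval_nat_numeral field_simps)
  then have "0 < a * q - s * l"
    using t by (simp add: add_pos_nonneg)
  also have "\<dots> \<le> a * q - real m * q * l"
    using mult_right_mono[OF mq] l by simp
  also have "\<dots> = f_mix m x * q"
    unfolding f by (simp add: algebra_simps)
  finally show ?thesis
    using q by (simp add: zero_less_mult_iff)
qed

lemma largest_f_mix_root:
  assumes "18 \<le> m"
  shows "f_mix m (Max {x. f_mix m x = 0}) = 0" and "21/5 \<le> Max {x. f_mix m x = 0}"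
proof -
  have "0 < f_mix m (real m)"
    using assms by (intro f_mix_pos_if_p_m_nonneg p_m_nonneg_if_ge_m) auto
  moreover have "continuous_on {21/5..real m} (f_mix m)"
    unfolding f_mix_def by (intro continuous_intros)
  ultimately obtain x where "21/5 \<le> x" "f_mix m x = 0"
    using IVT'[of "f_mix m" "21/5" 0 "real m"] f_mix_neg_at_21_5[OF assms] assms by force
  then show "f_mix m (Max {x. f_mix m x = 0}) = 0" "21/5 \<le> Max {x. f_mix m x = 0}"
    using Max_in[OF finite_f_mix_roots[of m]] Max_ge[OF finite_f_mix_roots[of m], of x] by auto
qed

lemma p_m_nonneg_if_ge_rho':
  assumes "18 \<le> m" and "rho' m \<le> x"
  shows "0 \<le> p_m m x"
proof (rule ccontr)
  assume neg: "\<not> 0 \<le> p_m m x"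
  have "0 \<le> p_m m (max x (real m))"
    using assms(1) by (intro p_m_nonneg_if_ge_m) auto
  moreover have "continuous_on {x..max x (real m)} (p_m m)"
    unfolding p_m_def by (intro continuous_intros)
  ultimately obtain y where "x \<le> y" and y: "p_m m y = 0"
    using IVT'[of "p_m m" x 0 "max x (real m)"] neg by force
  moreover have "y \<le> rho' m"
    unfolding rho'_def using Max_ge[OF finite_p_m_roots[of m]] y by simp
  ultimately have "y = x"
    using assms(2) by linarith
  then show False
    using y neg by simp
qed

theorem proposition6p4:
  fixes m :: nat
  assumes "even m" and "m \<ge> 18"
  shows "spectral_radius (mix_adj_mat m) = Max {x. f_mix m x = 0}
         \<and> spectral_radius (mix_adj_mat m) < rho' m"
proof -
  define r where "r = Max {x. f_mix m x = 0}"
  have root: "f_mix m r = 0" and r: "21/5 \<le> r"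
    using largest_f_mix_root[OF assms(2)] unfolding r_def by auto
  have "spectral_radius (mix_adj_mat m) = r"
    using assms(2) mix_weight_pos[OF r] mix_weight_eigen[OF assms(2) root]
    by (intro spectral_radius_eq_of_positive_eigenvector[OF mix_adj_mat_carrier _ mix_adj_mat_entry]) auto
  moreover have "r < rho' m"
  proof (rule ccontr)
    assume "\<not> r < rho' m"
    then have "0 \<le> p_m m r"
      using assms(2) by (intro p_m_nonneg_if_ge_rho') auto
    then show False
      using f_mix_pos_if_p_m_nonneg[OF r, of m] root by simp
  qed
  ultimately show ?thesis
    unfolding r_def by simp
qed

end
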